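(* Let $L$ be an admissible multigraph. Then every vertex of $L$ has odd degree, and this degree is greater than one.
   Context: Multigraphs may have multiple edges and loops. A trail is a sequence $v_0,e_1,v_1,\ldots,e_k,v_k$ with $e_i$ an edge joining $v_{i-1}$ and $v_i$ and no edge repeated; its length is $k$. A trail spans $L$ if every vertex of $L$ lies on it. $t(L)$ denotes the length of a longest trail in $L$. A multigraph $L$ is admissible if (A-1) $t(L)<|E(L)|$, and (A-2) for each vertex $v\in V(L)$ and each edge $e$ incident with $v$, there is a trail of length $t(L)$ beginning $v,e,\ldots$ which spans $L$. *)

theory Defs
  imports Main
begin

text \<open>A finite multigraph (multiple edges and loops allowed) is given by a vertex set V,
an edge set E and a map ends assigning to each edge its two (unordered) endpoints,
given as a pair; a loop has equal endpoints.\<close>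

definition multigraph :: "'v set \<Rightarrow> 'e set \<Rightarrow> ('e \<Rightarrow> 'v \<times> 'v) \<Rightarrow> bool" where
  "multigraph V E ends \<longleftrightarrow> finite V \<and> finite E \<and>
     (\<forall>e\<in>E. fst (ends e) \<in> V \<and> snd (ends e) \<in> V)"

definition joins :: "('e \<Rightarrow> 'v \<times> 'v) \<Rightarrow> 'e \<Rightarrow> 'v \<Rightarrow> 'v \<Rightarrow> bool" where
  "joins ends e u w \<longleftrightarrow> ends e = (u, w) \<or> ends e = (w, u)"

definition incident :: "('e \<Rightarrow> 'v \<times> 'v) \<Rightarrow> 'e \<Rightarrow> 'v \<Rightarrow> bool" where
  "incident ends e v \<longleftrightarrow> fst (ends e) = v \<or> snd (ends e) = v"

text \<open>Degree: loops count twice.\<close>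
definition degree :: "'e set \<Rightarrow> ('e \<Rightarrow> 'v \<times> 'v) \<Rightarrow> 'v \<Rightarrow> nat" where
  "degree E ends v = card {e\<in>E. fst (ends e) = v} + card {e\<in>E. snd (ends e) = v}"

definition trail :: "'v set \<Rightarrow> 'e set \<Rightarrow> ('e \<Rightarrow> 'v \<times> 'v) \<Rightarrow> 'v list \<Rightarrow> 'e list \<Rightarrow> bool" where
  "trail V E ends vs es \<longleftrightarrow> length vs = Suc (length es) \<and> set vs \<subseteq> V \<and>
     set es \<subseteq> E \<and> distinct es \<and>
     (\<forall>i<length es. joins ends (es ! i) (vs ! i) (vs ! Suc i))"

definition spans :: "'v set \<Rightarrow> 'v list \<Rightarrow> bool" where
  "spans V vs \<longleftrightarrow> V \<subseteq> set vs"

definition longest_trail :: "'v set \<Rightarrow> 'e set \<Rightarrow> ('e \<Rightarrow> 'v \<times> 'v) \<Rightarrow> nat" where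
  "longest_trail V E ends = Max {length es | vs es. trail V E ends vs es}"

definition admissible :: "'v set \<Rightarrow> 'e set \<Rightarrow> ('e \<Rightarrow> 'v \<times> 'v) \<Rightarrow> bool" where
  "admissible V E ends \<longleftrightarrow>
     longest_trail V E ends < card E \<and>
     (\<forall>v\<in>V. \<forall>e\<in>E. incident ends e v \<longrightarrow>
        (\<exists>vs es. trail V E ends vs es \<and> length es = longest_trail V E ends \<and>
                 spans V vs \<and> es \<noteq> [] \<and> vs ! 0 = v \<and> es ! 0 = e))"

end

theory Submission
  imports Defs
begin

text \<open>
Let T be a longest trail that starts v, e and spans L. A longest trail cannot be extended,
so all edges at its last vertex, and (reversing it) all edges at its first vertex v, lie on T.
T is not closed: some edge f lies off T (as t(L) < |E(L)|) and has an end on T, and rotating a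
closed T to end there and appending f would give a longer trail. Along an open trail each edge
contributes one edge-end to each of two consecutive vertices, so the start vertex has odd degree
in T, hence in L. If v had degree 1, with edge e to u, a longest trail starting u, e would stop
at v, so t(L) = 1 and V(L) = {u, v}; then every edge lies on this trail, contradicting
t(L) < |E(L)|.
\<close>

lemma joins_sym: "joins ends e u w \<longleftrightarrow> joins ends e w u"
  by (auto simp: joins_def)

lemma joins_incident: "joins ends e u w \<Longrightarrow> incident ends e u \<and> incident ends e w"
  by (auto simp: joins_def incident_def)

lemma trail_length_vertices: "trail V E ends vs es \<Longrightarrow> length vs = Suc (length es)"
  by (simp add: trail_def)

lemma trail_hd_last_nth:
  assumes "trail V E ends vs es"
  shows "hd vs = vs ! 0" "last vs = vs ! length es"
proof -
  have "length vs = Suc (length es)" using trail_length_vertices[OF assms] .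
  moreover from this have "vs \<noteq> []" by auto
  ultimately show "hd vs = vs ! 0" "last vs = vs ! length es"
    by (simp_all add: hd_conv_nth last_conv_nth)
qed

lemma trail_length_le_card:
  assumes "finite E" "trail V E ends vs es"
  shows "length es \<le> card E"
proof -
  have "length es = card (set es)" using assms(2) by (simp add: trail_def distinct_card)
  also have "\<dots> \<le> card E" using assms by (intro card_mono) (auto simp: trail_def)
  finally show ?thesis .
qed

lemma trail_length_le_longest_trail:
  assumes "multigraph V E ends" "trail V E ends vs es"
  shows "length es \<le> longest_trail V E ends"
proof -
  have "finite E" using assms(1) by (simp add: multigraph_def)
  then have "{length es | vs es. trail V E ends vs es} \<subseteq> {..card E}"
    using trail_length_le_card by blast
  then have "finite {length es | vs es. trail V E ends vs es}"
    using finite_subset by blast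
  then show ?thesis unfolding longest_trail_def using assms(2) by (intro Max_ge) auto
qed

lemma trail_snoc:
  assumes "trail V E ends vs es" "f \<in> E" "f \<notin> set es" "joins ends f (last vs) y" "y \<in> V"
  shows "trail V E ends (vs @ [y]) (es @ [f])"
  using assms trail_hd_last_nth(2)[OF assms(1)] by (auto simp: trail_def nth_append less_Suc_eq)

lemma trail_rev:
  assumes "trail V E ends vs es"
  shows "trail V E ends (rev vs) (rev es)"
  unfolding trail_def
proof (intro conjI allI impI)
  fix i assume i: "i < length (rev es)"
  let ?n = "length es"
  have "joins ends (es ! (?n - Suc i)) (vs ! (?n - Suc i)) (vs ! Suc (?n - Suc i))"
    using assms i by (auto simp: trail_def)
  moreover have "Suc (?n - Suc i) = ?n - i" using i by simp
  ultimately show "joins ends (rev es ! i) (rev vs ! i) (rev vs ! Suc i)"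
    using i trail_length_vertices[OF assms] by (simp add: rev_nth joins_sym)
qed (use assms in \<open>auto simp: trail_def\<close>)

lemma closed_trail_rotate:
  assumes "trail V E ends vs es" "hd vs = last vs" "k < length es"
  shows "\<exists>ws. trail V E ends ws (rotate k es) \<and> last ws = vs ! k"
proof -
  let ?n = "length es" and ?ws = "rotate k (butlast vs) @ [vs ! k]"
  have lvs: "length vs = Suc ?n" using trail_length_vertices[OF assms(1)] .
  have closed: "vs ! 0 = vs ! ?n" using assms(2) trail_hd_last_nth[OF assms(1)] by simp
  have ws_nth: "?ws ! i = vs ! ((k + i) mod ?n)" if "i \<le> ?n" for i
  proof (cases "i < ?n")
    case True
    have "(k + i) mod ?n < ?n" using assms(3) by (intro mod_less_divisor) linarith
    then show ?thesis using True lvs by (simp add: nth_append nth_rotate nth_butlast)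
  next
    case False
    then show ?thesis using that assms(3) lvs by (simp add: nth_append)
  qed
  have ws_Suc: "vs ! ((k + Suc i) mod ?n) = vs ! Suc ((k + i) mod ?n)" for i
    using closed mod_Suc[of "k + i" ?n] by simp
  have "trail V E ends ?ws (rotate k es)"
    unfolding trail_def
  proof (intro conjI allI impI)
    fix i assume "i < length (rotate k es)"
    moreover have "(k + i) mod ?n < ?n" using assms(3) by (intro mod_less_divisor) linarith
    then have "joins ends (es ! ((k + i) mod ?n)) (vs ! ((k + i) mod ?n)) (vs ! Suc ((k + i) mod ?n))"
      using assms(1) by (auto simp: trail_def)
    ultimately show "joins ends (rotate k es ! i) (?ws ! i) (?ws ! Suc i)"
      using ws_nth[of i] ws_nth[of "Suc i"] ws_Suc[of i] by (simp add: nth_rotate)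
  qed (use assms lvs in \<open>auto simp: trail_def dest: in_set_butlastD\<close>)
  then show ?thesis by auto
qed

lemma trail_vertex_incident:
  assumes "trail V E ends vs es" "es \<noteq> []" "x \<in> set vs"
  shows "\<exists>e\<in>set es. incident ends e x"
proof -
  obtain j where j: "j < length vs" "vs ! j = x" using assms(3) by (auto simp: in_set_conv_nth)
  have lvs: "length vs = Suc (length es)" using trail_length_vertices[OF assms(1)] .
  obtain i where i: "i < length es" "j = i \<or> j = Suc i"
  proof (cases "j < length es")
    case False
    then show ?thesis using that[of "j - 1"] j(1) lvs assms(2) by (cases j) auto
  qed blast
  then have "joins ends (es ! i) (vs ! i) (vs ! Suc i)" "es ! i \<in> set es"
    using assms(1) by (auto simp: trail_def)
  then show ?thesis using i(2) j(2) by (auto dest: joins_incident)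
qed

lemma trail_stops_at_pendant_vertex:
  assumes "trail V E ends vs es" "es \<noteq> []" "{f \<in> E. incident ends f (vs ! 1)} = {es ! 0}"
  shows "es = [es ! 0]"
proof (rule ccontr)
  assume "es \<noteq> [es ! 0]"
  then have "1 < length es" using assms(2) by (cases es) auto
  then have "joins ends (es ! 1) (vs ! 1) (vs ! Suc 1)" "es ! 1 \<in> E"
    using assms(1) by (auto simp: trail_def)
  then have "es ! 1 = es ! 0" using assms(3) by (auto dest: joins_incident)
  then show False
    using assms(1,2) \<open>1 < length es\<close> nth_eq_iff_index_eq[of es 1 0] by (auto simp: trail_def)
qed

lemma longest_trail_last_incident_edges:
  assumes "multigraph V E ends" "trail V E ends vs es" "length es = longest_trail V E ends"
    and "f \<in> E" "incident ends f (last vs)"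
  shows "f \<in> set es"
proof (rule ccontr)
  assume "f \<notin> set es"
  define y where "y = (if fst (ends f) = last vs then snd (ends f) else fst (ends f))"
  have "joins ends f (last vs) y"
    using assms(5) by (cases "ends f") (auto simp: y_def joins_def incident_def)
  moreover have "y \<in> V" using assms(1,4) by (auto simp: y_def multigraph_def)
  ultimately have "trail V E ends (vs @ [y]) (es @ [f])"
    by (rule trail_snoc[OF assms(2,4) \<open>f \<notin> set es\<close>])
  from trail_length_le_longest_trail[OF assms(1) this] assms(3) show False by simp
qed

lemma longest_trail_hd_incident_edges:
  assumes "multigraph V E ends" "trail V E ends vs es" "length es = longest_trail V E ends"
    and "f \<in> E" "incident ends f (hd vs)"
  shows "f \<in> set es"
proof -
  have "vs \<noteq> []" using trail_length_vertices[OF assms(2)] by auto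
  then have "last (rev vs) = hd vs" by (simp add: last_rev)
  then show ?thesis
    using longest_trail_last_incident_edges[OF assms(1) trail_rev[OF assms(2)]] assms(3-5) by simp
qed

lemma longest_spanning_trail_not_closed:
  assumes "multigraph V E ends" "longest_trail V E ends < card E"
    and "trail V E ends vs es" "length es = longest_trail V E ends" "spans V vs" "es \<noteq> []"
  shows "hd vs \<noteq> last vs"
proof
  assume closed: "hd vs = last vs"
  have "\<not> E \<subseteq> set es"
    using assms(2-4) card_mono[of "set es" E] by (auto simp: trail_def distinct_card)
  then obtain f where f: "f \<in> E" "f \<notin> set es" by blast
  have ends_f: "fst (ends f) \<in> V" "snd (ends f) \<in> V" using assms(1) f(1) by (auto simp: multigraph_def)
  then have "fst (ends f) \<in> set vs" using assms(5) by (auto simp: spans_def)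
  then obtain j where j: "j < length vs" "vs ! j = fst (ends f)" by (metis in_set_conv_nth)
  have lvs: "length vs = Suc (length es)" using trail_length_vertices[OF assms(3)] .
  define k where "k = j mod length es"
  have "k < length es" using assms(6) by (simp add: k_def)
  have "vs ! k = vs ! j"
  proof (cases "j < length es")
    case False
    then have "j = length es" using j(1) lvs by simp
    moreover from this have "k = 0" by (simp add: k_def)
    ultimately show ?thesis using closed trail_hd_last_nth[OF assms(3)] by simp
  qed (simp add: k_def)
  then have k: "k < length es" "vs ! k = fst (ends f)" using \<open>k < length es\<close> j(2) by simp_all
  obtain ws where ws: "trail V E ends ws (rotate k es)" "last ws = fst (ends f)"
    using closed_trail_rotate[OF assms(3) closed k(1)] k(2) by auto
  have "trail V E ends (ws @ [snd (ends f)]) (rotate k es @ [f])"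
    using trail_snoc[OF ws(1) f(1)] f(2) ws(2) ends_f by (simp add: joins_def)
  from trail_length_le_longest_trail[OF assms(1) this] assms(4) show False by simp
qed

lemma card_filter_insert:
  assumes "finite S" "f \<notin> S"
  shows "card {e \<in> insert f S. P e} = card {e \<in> S. P e} + of_bool (P f)"
proof (cases "P f")
  case True
  then have "{e \<in> insert f S. P e} = insert f {e \<in> S. P e}" by auto
  then show ?thesis using assms True by simp
next
  case False
  then have "{e \<in> insert f S. P e} = {e \<in> S. P e}" by auto
  then show ?thesis using False by simp
qed

lemma degree_insert:
  assumes "finite S" "f \<notin> S"
  shows "degree (insert f S) ends v
    = degree S ends v + of_bool (fst (ends f) = v) + of_bool (snd (ends f) = v)"
  using card_filter_insert[OF assms] by (simp add: degree_def)

text \<open>Each edge of a trail contributes one edge-end to each of its two consecutive vertices,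
so only the endpoints of the prefix can break the pairing.\<close>

lemma trail_degree_prefix_parity:
  assumes "trail V E ends vs es" "m \<le> length es"
  shows "even (degree (set (take m es)) ends v + of_bool (vs ! 0 = v) + of_bool (vs ! m = v))"
  using assms(2)
proof (induction m)
  case 0
  then show ?case by (simp add: degree_def)
next
  case (Suc m)
  then have m: "m < length es" by simp
  have "joins ends (es ! m) (vs ! m) (vs ! Suc m)" using assms(1) m by (auto simp: trail_def)
  then have ends_m: "of_bool (fst (ends (es ! m)) = v) + of_bool (snd (ends (es ! m)) = v)
      = of_bool (vs ! m = v) + (of_bool (vs ! Suc m = v) :: nat)"
    by (cases "ends (es ! m)") (auto simp: joins_def)
  have "es ! m \<notin> set (take m es)"
    using assms(1) m by (auto simp: trail_def in_set_conv_nth nth_eq_iff_index_eq)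
  then have "degree (set (take (Suc m) es)) ends v
      = degree (set (take m es)) ends v + of_bool (vs ! m = v) + of_bool (vs ! Suc m = v)"
    using m ends_m by (simp add: take_Suc_conv_app_nth degree_insert)
  then show ?case using Suc.IH m by presburger
qed

lemma open_trail_odd_degree_start:
  assumes "trail V E ends vs es" "hd vs \<noteq> last vs"
  shows "odd (degree (set es) ends (hd vs))"
  using trail_degree_prefix_parity[OF assms(1) order.refl, of "hd vs"] assms(2)
    trail_hd_last_nth[OF assms(1)] by simp

lemma degree_eq_if_incident_edges_subset:
  assumes "S \<subseteq> E" "\<And>f. f \<in> E \<Longrightarrow> incident ends f v \<Longrightarrow> f \<in> S"
  shows "degree S ends v = degree E ends v"
proof -
  have "{e \<in> S. fst (ends e) = v} = {e \<in> E. fst (ends e) = v}"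
       "{e \<in> S. snd (ends e) = v} = {e \<in> E. snd (ends e) = v}"
    using assms by (auto simp: incident_def)
  then show ?thesis by (simp add: degree_def)
qed

lemma degree_eq_1_unique_edge:
  assumes "finite E" "degree E ends v = 1"
  obtains e where "{f \<in> E. incident ends f v} = {e}" "fst (ends e) \<noteq> snd (ends e)"
proof -
  let ?A = "{f \<in> E. fst (ends f) = v}" and ?B = "{f \<in> E. snd (ends f) = v}"
  have "card ?A = 0 \<and> card ?B = 1 \<or> card ?A = 1 \<and> card ?B = 0"
    using assms(2) by (simp add: degree_def) arith
  then obtain e where e: "?A \<union> ?B = {e}" "?A \<inter> ?B = {}"
    using assms(1) by (auto simp: card_1_singleton_iff)
  moreover have "{f \<in> E. incident ends f v} = ?A \<union> ?B" by (auto simp: incident_def)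
  moreover have "fst (ends e) \<noteq> snd (ends e)"
  proof
    assume "fst (ends e) = snd (ends e)"
    moreover have "e \<in> ?A \<union> ?B" using e(1) by simp
    ultimately have "e \<in> ?A \<inter> ?B" by auto
    then show False using e(2) by simp
  qed
  ultimately show ?thesis using that by simp
qed

lemma admissible_trailE:
  assumes "admissible V E ends" "v \<in> V" "e \<in> E" "incident ends e v"
  obtains vs es where "trail V E ends vs es" "length es = longest_trail V E ends"
    "spans V vs" "es \<noteq> []" "hd vs = v" "es ! 0 = e"
proof -
  have "\<exists>vs es. trail V E ends vs es \<and> length es = longest_trail V E ends \<and>
      spans V vs \<and> es \<noteq> [] \<and> vs ! 0 = v \<and> es ! 0 = e"
    using assms unfolding admissible_def by blast
  then show ?thesis using that trail_hd_last_nth(1) by metis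
qed

lemma admissible_longest_trail_less_card:
  "admissible V E ends \<Longrightarrow> longest_trail V E ends < card E"
  by (simp add: admissible_def)

lemma admissible_incident_edge:
  assumes "multigraph V E ends" "admissible V E ends" "v \<in> V"
  shows "\<exists>e\<in>E. incident ends e v"
proof -
  obtain e0 where e0: "e0 \<in> E"
    using admissible_longest_trail_less_card[OF assms(2)] by (metis card.empty ex_in_conv not_less0)
  moreover have "fst (ends e0) \<in> V" "incident ends e0 (fst (ends e0))"
    using assms(1) e0 by (auto simp: multigraph_def incident_def)
  ultimately obtain vs es where "trail V E ends vs es" "spans V vs" "es \<noteq> []"
    using admissible_trailE[OF assms(2)] by metis
  moreover have "v \<in> set vs" using \<open>spans V vs\<close> assms(3) by (auto simp: spans_def)
  ultimately obtain e where "e \<in> set es" "incident ends e v" using trail_vertex_incident by metis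
  then show ?thesis using \<open>trail V E ends vs es\<close> by (auto simp: trail_def)
qed

lemma admissible_odd_degree:
  assumes "multigraph V E ends" "admissible V E ends" "v \<in> V"
  shows "odd (degree E ends v)"
proof -
  obtain e where "e \<in> E" "incident ends e v" using admissible_incident_edge[OF assms] by blast
  then obtain vs es where T: "trail V E ends vs es" "length es = longest_trail V E ends"
      "spans V vs" "es \<noteq> []" "hd vs = v"
    using admissible_trailE[OF assms(2,3)] by metis
  have "hd vs \<noteq> last vs"
    using longest_spanning_trail_not_closed[OF assms(1) _ T(1-4)]
      admissible_longest_trail_less_card[OF assms(2)] by blast
  then have "odd (degree (set es) ends v)" using open_trail_odd_degree_start[OF T(1)] T(5) by simp
  moreover have "set es \<subseteq> E" using T(1) by (simp add: trail_def)
  then have "degree (set es) ends v = degree E ends v"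
    using longest_trail_hd_incident_edges[OF assms(1) T(1,2)] T(5)
    by (intro degree_eq_if_incident_edges_subset) simp_all
  ultimately show ?thesis by simp
qed

lemma admissible_degree_ne_1:
  assumes "multigraph V E ends" "admissible V E ends" "v \<in> V"
  shows "degree E ends v \<noteq> 1"
proof
  assume deg_1: "degree E ends v = 1"
  have "finite E" using assms(1) by (simp add: multigraph_def)
  then obtain e where only_e: "{f \<in> E. incident ends f v} = {e}"
      and no_loop: "fst (ends e) \<noteq> snd (ends e)"
    using deg_1 by (rule degree_eq_1_unique_edge)
  have e: "e \<in> E" "incident ends e v" using only_e by auto
  define u where "u = (if fst (ends e) = v then snd (ends e) else fst (ends e))"
  have joins_uv: "joins ends e u v" and "u \<noteq> v"
    using e(2) no_loop by (cases "ends e"; auto simp: u_def joins_def incident_def)+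
  have "u \<in> V" using assms(1) e(1) by (auto simp: u_def multigraph_def)
  moreover have "incident ends e u" using joins_incident[OF joins_uv] by simp
  ultimately obtain ws fs where W: "trail V E ends ws fs" "length fs = longest_trail V E ends"
      "spans V ws" "fs \<noteq> []" "hd ws = u" "fs ! 0 = e"
    using admissible_trailE[OF assms(2) _ e(1)] by blast
  have ws0: "ws ! 0 = u" using W(5) trail_hd_last_nth(1)[OF W(1)] by simp
  have "joins ends (fs ! 0) (ws ! 0) (ws ! 1)" using W(1,4) by (auto simp: trail_def)
  then have ws1: "ws ! 1 = v" using ws0 W(6) joins_uv \<open>u \<noteq> v\<close> by (auto simp: joins_def)
  then have "fs = [e]" using trail_stops_at_pendant_vertex[OF W(1,4)] only_e W(6) by simp
  then have "length ws = 2" using trail_length_vertices[OF W(1)] by simp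
  then have "ws = [u, v]" using ws0 ws1 by (auto simp: numeral_2_eq_2 length_Suc_conv)
  then have V_uv: "V \<subseteq> {u, v}" using W(3) by (simp add: spans_def)
  have "E \<subseteq> {e}"
  proof
    fix f assume f: "f \<in> E"
    then have "incident ends f u \<or> incident ends f v"
      using assms(1) V_uv by (auto simp: multigraph_def incident_def)
    then show "f \<in> {e}"
      using longest_trail_hd_incident_edges[OF assms(1) W(1,2) f] W(5) only_e f \<open>fs = [e]\<close> by auto
  qed
  then have "card E \<le> 1" using card_mono[of "{e}" E] by simp
  then show False
    using admissible_longest_trail_less_card[OF assms(2)] W(2) \<open>fs = [e]\<close> by simp
qed

theorem lemma2p6:
  fixes V :: "'v set" and E :: "'e set" and ends :: "'e \<Rightarrow> 'v \<times> 'v"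
  assumes "multigraph V E ends"
    and "admissible V E ends"
    and "v \<in> V"
  shows "odd (degree E ends v) \<and> degree E ends v > 1"
proof -
  have "odd (degree E ends v)" using admissible_odd_degree[OF assms] .
  moreover have "degree E ends v \<noteq> 1" using admissible_degree_ne_1[OF assms] .
  ultimately show ?thesis by (cases "degree E ends v") auto
qed

end
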